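(* Let $A$ be a finite set, $\bot,\dagger\notin A$ distinct extra symbols, $N\geq1$, and let $\mathsf L$, $\pi$ and $\zeta_t$ ($t>0$) be as in the context. Then for all $x,y\in\mathsf L$, $$\zeta_t^{-1}(x,y)=\begin{cases}-\pi(y|x)^t & \text{if } y\in\mathsf L_x^{(1)},\\ 1 & \text{if } y=x,\\ 0&\text{otherwise},\end{cases}$$ where $\mathsf L_x^{(1)}=\{y\in\mathsf L: y=xa \text{ for some } a\in A\cup\{\dagger\}\}$ is the set of elements of $\mathsf L$ extending $x$ on the right by exactly one token.
   Context: $A^*$ is the set of finite strings over $A$, $|x|$ denotes length (with $\bot,\dagger$ counted). $\mathsf L=\{\bot a : a\in A^*,\ |a|\leq N-1\}\sqcup\{\bot a\dagger : a\in A^*,\ |a|<N-1\}$, partially ordered by the prefix relation ($x\leq y$ iff $y=xa'$ for some string $a'$). Strings $\bot a$ are unfinished texts. For each unfinished text $x\in\mathsf L$ with $|x|\leq N-1$ a probability mass function $p(-|x)$ on $A\cup\{\dagger\}$ is given. Define $\pi(y|x)=1$ if $x=y$; $0$ if $x\not\leq y$; and if $x=\bot a_1\cdots a_t$ is a proper prefix of $y=xa_{t+1}\cdots a_{t+k}$, $\pi(y|x)=\prod_{i=1}^k p(a_{t+i}\mid\bot a_1\cdots a_{t+i-1})$. For $t>0$, $\zeta_t$ is the $\mathsf L\times\mathsf L$ matrix $\zeta_t(x,y)=\pi(y|x)^t$ (which is invertible). *)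

theory Defs
  imports Complex_Main
begin

text \<open>Symbols: the alphabet A (a subset of type 'a) together with the two
  extra distinct symbols Bot (the start symbol) and Dag (end of text).\<close>
datatype 'a sym = Bot | Sym 'a | Dag

text \<open>Texts are lists of symbols; the length of a list counts Bot and Dag.\<close>
definition texts :: "'a set \<Rightarrow> nat \<Rightarrow> 'a sym list set" where
  "texts A N =
     {Bot # map Sym a | a. set a \<subseteq> A \<and> length a \<le> N - 1}
   \<union> {Bot # map Sym a @ [Dag] | a. set a \<subseteq> A \<and> length a < N - 1}"

definition unfinished :: "'a set \<Rightarrow> 'a sym list \<Rightarrow> bool" where
  "unfinished A x \<longleftrightarrow> (\<exists>a. set a \<subseteq> A \<and> x = Bot # map Sym a)"

definition pre :: "'a sym list \<Rightarrow> 'a sym list \<Rightarrow> bool" where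
  "pre x y \<longleftrightarrow> (\<exists>a'. y = x @ a')"

definition tokens :: "'a set \<Rightarrow> 'a sym set" where
  "tokens A = Sym ` A \<union> {Dag}"

definition cond_pmfs :: "'a set \<Rightarrow> nat \<Rightarrow> ('a sym list \<Rightarrow> 'a sym \<Rightarrow> real) \<Rightarrow> bool" where
  "cond_pmfs A N p \<longleftrightarrow>
     (\<forall>x \<in> texts A N. unfinished A x \<and> length x \<le> N - 1 \<longrightarrow>
        (\<forall>s \<in> tokens A. p x s \<ge> 0) \<and> (\<Sum>s \<in> tokens A. p x s) = 1)"

text \<open>pi(y|x): with list indexing y!0 = Bot, y!j = a_j, the factor
  p(a_j | Bot a_1 ... a_{j-1}) is p (take j y) (y ! j).\<close>
definition cpi :: "('a sym list \<Rightarrow> 'a sym \<Rightarrow> real) \<Rightarrow> 'a sym list \<Rightarrow> 'a sym list \<Rightarrow> real" where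
  "cpi p y x =
     (if x = y then 1
      else if \<not> pre x y then 0
      else (\<Prod>j \<in> {length x..<length y}. p (take j y) (y ! j)))"

definition zeta :: "('a sym list \<Rightarrow> 'a sym \<Rightarrow> real) \<Rightarrow> real \<Rightarrow> 'a sym list \<Rightarrow> 'a sym list \<Rightarrow> real" where
  "zeta p t x y = (cpi p y x) powr t"

definition is_inverse_on :: "'i set \<Rightarrow> ('i \<Rightarrow> 'i \<Rightarrow> real) \<Rightarrow> ('i \<Rightarrow> 'i \<Rightarrow> real) \<Rightarrow> bool" where
  "is_inverse_on I M M' \<longleftrightarrow>
     (\<forall>x\<in>I. \<forall>y\<in>I. (\<Sum>z\<in>I. M x z * M' z y) = (if x = y then 1 else 0)) \<and>
     (\<forall>x\<in>I. \<forall>y\<in>I. (\<Sum>z\<in>I. M' x z * M z y) = (if x = y then 1 else 0))"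

definition one_step :: "'a set \<Rightarrow> nat \<Rightarrow> 'a sym list \<Rightarrow> 'a sym list set" where
  "one_step A N x = {y \<in> texts A N. \<exists>s \<in> tokens A. y = x @ [s]}"

end

theory Submission
  imports Defs "HOL-Library.Sublist"
begin

(* Since \<pi>(y|x) is a product over the positions between |x| and |y|, \<zeta> = \<zeta>_t is
   multiplicative along chains: \<zeta>(x,y) = \<zeta>(x,w) \<zeta>(w,y) for x \<le> w \<le> y.
   In the prefix order a word y has at most one immediate predecessor (butlast y), and if
   x < y then exactly one immediate successor of x lies below y. So in both products of
   \<zeta> with the proposed inverse the only off-diagonal contributions are \<zeta>(x,y) and
   -\<zeta>(x,w) \<zeta>(w,y) for that single intermediate w, and they cancel. *)

definition child :: "'b list \<Rightarrow> 'b list \<Rightarrow> bool" where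
  "child x y \<longleftrightarrow> (\<exists>s. y = x @ [s])"

lemma child_prefix_iff:
  "child x z \<and> prefix z y \<longleftrightarrow> prefix x y \<and> x \<noteq> y \<and> z = take (Suc (length x)) y"
proof
  assume "child x z \<and> prefix z y"
  then obtain s b where "z = x @ [s]" "y = x @ s # b" by (auto simp: child_def prefix_def)
  then show "prefix x y \<and> x \<noteq> y \<and> z = take (Suc (length x)) y" by simp
next
  assume "prefix x y \<and> x \<noteq> y \<and> z = take (Suc (length x)) y"
  then obtain b where b: "y = x @ b" "b \<noteq> []" "z = take (Suc (length x)) y"
    by (auto simp: prefix_def)
  then obtain s b' where "b = s # b'" by (cases b) auto
  with b have "y = x @ s # b'" "z = x @ [s]" by simp_all
  then show "child x z \<and> prefix z y" by (simp add: child_def)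
qed

lemma prefix_child_iff:
  "prefix x z \<and> child z y \<longleftrightarrow> prefix x y \<and> x \<noteq> y \<and> z = butlast y"
proof
  assume "prefix x z \<and> child z y"
  then obtain s b where "z = x @ b" "y = x @ b @ [s]" by (auto simp: child_def prefix_def)
  then show "prefix x y \<and> x \<noteq> y \<and> z = butlast y" by (simp flip: append_assoc)
next
  assume "prefix x y \<and> x \<noteq> y \<and> z = butlast y"
  then show "prefix x z \<and> child z y"
    by (metis child_def append_butlast_last_id prefix_snoc prefix_Nil)
qed

lemma is_inverse_on_cong:
  assumes "is_inverse_on I M M'" "\<And>x y. x \<in> I \<Longrightarrow> y \<in> I \<Longrightarrow> M' x y = M'' x y"
  shows "is_inverse_on I M M''"
  using assms unfolding is_inverse_on_def by (simp cong: sum.cong)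

locale chain_multiplicative =
  fixes I :: "'b list set" and f :: "'b list \<Rightarrow> 'b list \<Rightarrow> real"
  assumes finite: "finite I"
    and convex: "x \<in> I \<Longrightarrow> y \<in> I \<Longrightarrow> prefix x w \<Longrightarrow> prefix w y \<Longrightarrow> w \<in> I"
    and refl: "f x x = 1"
    and nonprefix: "\<not> prefix x y \<Longrightarrow> f x y = 0"
    and mult: "x \<in> I \<Longrightarrow> w \<in> I \<Longrightarrow> y \<in> I \<Longrightarrow> prefix x w \<Longrightarrow> prefix w y \<Longrightarrow>
      f x y = f x w * f w y"
begin

definition moebius :: "'b list \<Rightarrow> 'b list \<Rightarrow> real" where
  "moebius x y = (if child x y then - f x y else if y = x then 1 else 0)"

lemma sum_delta_intermediate:
  assumes "x \<in> I" "y \<in> I" "prefix x w" "prefix w y"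
  shows "(\<Sum>z\<in>I. if z = w then f x z * f z y else 0) = f x y"
  using assms finite convex[OF assms] mult[OF assms(1) _ assms(2-4)] by simp

lemma left_inverse:
  assumes "x \<in> I" "y \<in> I"
  shows "(\<Sum>z\<in>I. f x z * moebius z y) = (if x = y then 1 else 0)"
proof -
  let ?proper = "prefix x y \<and> x \<noteq> y"
  have "f x z * moebius z y = (if z = y then f x z else 0)
      - (if ?proper \<and> z = butlast y then f x z * f z y else 0)" for z
    using prefix_child_iff[of x z y]
    by (cases "child z y"; cases "prefix x z") (auto simp: moebius_def child_def nonprefix)
  moreover have "(\<Sum>z\<in>I. if ?proper \<and> z = butlast y then f x z * f z y else 0)
      = (if ?proper then f x y else 0)"
    using sum_delta_intermediate[OF assms _ prefixeq_butlast] prefix_child_iff[of x "butlast y" y]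
    by (cases ?proper) auto
  ultimately show ?thesis
    using assms finite by (simp add: sum_subtractf refl nonprefix)
qed

lemma right_inverse:
  assumes "x \<in> I" "y \<in> I"
  shows "(\<Sum>z\<in>I. moebius x z * f z y) = (if x = y then 1 else 0)"
proof -
  let ?proper = "prefix x y \<and> x \<noteq> y" and ?w = "take (Suc (length x)) y"
  have "moebius x z * f z y = (if z = x then f z y else 0)
      - (if ?proper \<and> z = ?w then f x z * f z y else 0)" for z
    using child_prefix_iff[of x z y]
    by (cases "child x z"; cases "prefix z y") (auto simp: moebius_def child_def nonprefix)
  moreover have "(\<Sum>z\<in>I. if ?proper \<and> z = ?w then f x z * f z y else 0)
      = (if ?proper then f x y else 0)"
    using sum_delta_intermediate[OF assms, of ?w] child_prefix_iff[of x ?w y]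
    by (cases ?proper) (auto simp: child_def)
  ultimately show ?thesis
    using assms finite by (simp add: sum_subtractf refl nonprefix)
qed

theorem is_inverse_on_moebius: "is_inverse_on I f moebius"
  by (simp add: is_inverse_on_def left_inverse right_inverse)

end

lemma pre_eq_prefix: "pre = prefix"
  by (simp add: fun_eq_iff pre_def prefix_def)

lemma texts_finite:
  assumes "finite A"
  shows "finite (texts A N)"
proof (rule finite_subset)
  show "texts A N \<subseteq> {xs. set xs \<subseteq> insert Bot (insert Dag (Sym ` A)) \<and> length xs \<le> N + 1}"
    by (auto simp: texts_def) blast+
  show "finite {xs. set xs \<subseteq> insert Bot (insert Dag (Sym ` A)) \<and> length xs \<le> N + 1}"
    using assms by (intro finite_lists_length_le) auto
qed

lemma texts_proper_prefix:
  assumes "y \<in> texts A N" "0 < j" "j < length y"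
  obtains b where "set b \<subseteq> A" "length b < N - 1" "take j y = Bot # map Sym b"
    "y ! j \<in> tokens A"
proof -
  obtain a e where a: "set a \<subseteq> A" "y = Bot # map Sym a @ e"
    and e: "(e = [] \<and> length a \<le> N - 1) \<or> (e = [Dag] \<and> length a < N - 1)"
    using assms(1) unfolding texts_def by fastforce
  obtain i where i: "j = Suc i" using assms(2) gr0_implies_Suc by blast
  have i_a: "i < length a \<or> (i = length a \<and> e = [Dag])"
    using e assms(3) a(2) i by auto
  show thesis
  proof
    show "set (take i a) \<subseteq> A" using a(1) set_take_subset by fastforce
    show "length (take i a) < N - 1" using e i_a by auto
    show "take j y = Bot # map Sym (take i a)"
      using i_a a(2) i by (auto simp: take_map)
    show "y ! j \<in> tokens A"
      using i_a a i by (auto simp: nth_append tokens_def dest: nth_mem)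
  qed
qed

lemma take_in_texts:
  assumes "y \<in> texts A N" "0 < j"
  shows "take j y \<in> texts A N"
proof (cases "j < length y")
  case True
  obtain b where "set b \<subseteq> A" "length b < N - 1" "take j y = Bot # map Sym b"
    using texts_proper_prefix[OF assms True] .
  then show ?thesis unfolding texts_def by auto
next
  case False
  then show ?thesis using assms(1) by simp
qed

lemma texts_prefix_convex:
  assumes "x \<in> texts A N" "y \<in> texts A N" "prefix x w" "prefix w y"
  shows "w \<in> texts A N"
proof -
  have "x \<noteq> []" using assms(1) by (auto simp: texts_def)
  then have "0 < length w"
    using prefix_length_le[OF assms(3)] by (metis length_greater_0_conv order_less_le_trans)
  then show ?thesis
    using take_in_texts[OF assms(2)] assms(4) by (metis prefix_def append_eq_conv_conj)
qed

lemma one_step_texts: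
  assumes "x \<in> texts A N"
  shows "one_step A N x = {y \<in> texts A N. child x y}"
proof -
  have "s \<in> tokens A" if "x @ [s] \<in> texts A N" for s
  proof -
    have "0 < length x" using assms by (auto simp: texts_def)
    then show ?thesis
      using texts_proper_prefix[OF that, of "length x"] by (simp add: nth_append)
  qed
  then show ?thesis by (auto simp: one_step_def child_def)
qed

lemma cpi_nonneg:
  assumes "cond_pmfs A N p" "x \<in> texts A N" "y \<in> texts A N"
  shows "0 \<le> cpi p y x"
proof -
  have "0 < length x" using assms(2) by (auto simp: texts_def)
  have "0 \<le> p (take j y) (y ! j)" if j: "length x \<le> j" "j < length y" for j
  proof -
    have "0 < j" using \<open>0 < length x\<close> j(1) by (rule order_less_le_trans)
    obtain b where b: "set b \<subseteq> A" "length b < N - 1" "take j y = Bot # map Sym b"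
      "y ! j \<in> tokens A"
      using texts_proper_prefix[OF assms(3) \<open>0 < j\<close> j(2)] .
    then have "take j y \<in> texts A N" "unfinished A (take j y)" "length (take j y) \<le> N - 1"
      unfolding texts_def unfinished_def by auto
    then show ?thesis using assms(1) b(4) unfolding cond_pmfs_def by blast
  qed
  then show ?thesis by (auto simp: cpi_def intro: prod_nonneg)
qed

lemma cpi_mult:
  assumes "prefix x w" "prefix w y"
  shows "cpi p y x = cpi p w x * cpi p y w"
proof (cases "x = w \<or> w = y")
  case False
  obtain v where v: "y = w @ v" using assms(2) prefix_def by blast
  have "prefix x y" using assms by (rule prefix_order.trans)
  moreover have "x \<noteq> y" using False assms by (metis prefix_order.antisym)
  ultimately have "cpi p y x = (\<Prod>j \<in> {length x..<length y}. p (take j y) (y ! j))"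
    by (simp add: cpi_def pre_eq_prefix)
  also have "\<dots> = (\<Prod>j \<in> {length x..<length w}. p (take j y) (y ! j)) *
      (\<Prod>j \<in> {length w..<length y}. p (take j y) (y ! j))"
    using assms by (intro prod.atLeastLessThan_concat[symmetric]) (simp_all add: prefix_length_le)
  also have "(\<Prod>j \<in> {length x..<length w}. p (take j y) (y ! j)) =
      (\<Prod>j \<in> {length x..<length w}. p (take j w) (w ! j))"
    using v by (intro prod.cong) (auto simp: nth_append)
  finally show ?thesis using False assms by (simp add: cpi_def pre_eq_prefix)
qed (auto simp: cpi_def)

lemma zeta_chain_multiplicative:
  assumes "finite A" "cond_pmfs A N p"
  shows "chain_multiplicative (texts A N) (zeta p t)"
proof
  show "finite (texts A N)" using assms(1) by (rule texts_finite)
  show "w \<in> texts A N" if "x \<in> texts A N" "y \<in> texts A N" "prefix x w" "prefix w y" for x y w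
    using that by (rule texts_prefix_convex)
  show "zeta p t x x = 1" for x by (simp add: zeta_def cpi_def)
  show "zeta p t x y = 0" if "\<not> prefix x y" for x y
    using that by (auto simp: zeta_def cpi_def pre_eq_prefix)
  show "zeta p t x y = zeta p t x w * zeta p t w y"
    if "x \<in> texts A N" "w \<in> texts A N" "y \<in> texts A N" "prefix x w" "prefix w y" for x w y
    using that cpi_nonneg[OF assms(2)] cpi_mult[OF that(4,5)]
    by (simp add: zeta_def powr_mult)
qed

theorem corollary3p8:
  fixes A :: "'a set" and N :: nat and p :: "'a sym list \<Rightarrow> 'a sym \<Rightarrow> real" and t :: real
  assumes "finite A" and "N \<ge> 1" and "cond_pmfs A N p" and "t > 0"
  shows "is_inverse_on (texts A N) (zeta p t)
           (\<lambda>x y. if y \<in> one_step A N x then - ((cpi p y x) powr t)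
                  else if y = x then 1 else 0)"
proof -
  interpret chain_multiplicative "texts A N" "zeta p t"
    using assms(1,3) by (rule zeta_chain_multiplicative)
  show ?thesis
  proof (rule is_inverse_on_cong[OF is_inverse_on_moebius])
    fix x y
    assume "x \<in> texts A N" "y \<in> texts A N"
    then show "moebius x y = (if y \<in> one_step A N x then - ((cpi p y x) powr t)
                  else if y = x then 1 else 0)"
      by (simp add: moebius_def one_step_texts zeta_def)
  qed
qed

end
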